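(* Let $\mathsf{Pk}$ be the finite set of packets and let $p$ be any ProbNetKAT program. Then for all $a,b \subseteq \mathsf{Pk}$, the limits defining the matrix semantics exist and \[ \mathcal{B}[\![p]\!]_{ab} = [\![p]\!](a)(\{b\}). \]
   Context: Fix finitely many fields $f_1,\dots,f_k$, each ranging over a finite set of natural numbers. A packet $\pi$ is a record assigning a value to each field; $\pi.f$ is the value of field $f$ and $\pi[f:=n]$ is $\pi$ with field $f$ updated to $n$. $\mathsf{Pk}$ is the finite set of all packets and $2^{\mathsf{Pk}}$ its powerset. Syntax. Predicates: $t ::= \mathsf{false} \mid \mathsf{true} \mid f=n \mid t \,\&\, u \mid t ; u \mid \neg t$ (disjunction, conjunction, negation). Programs: $p ::= t \mid f \leftarrow n \mid p \,\&\, q \mid p ; q \mid p \oplus_r q \mid p^*$ (filter, assignment, union/parallel composition, sequential composition, probabilistic choice with rational $r\in[0,1]$, iteration). Define $p^{(0)} := \mathsf{true}$ and $p^{(n+1)} := \mathsf{true} \,\&\, (p ; p^{(n)})$. Matrix semantics: $\mathcal{B}[\![p]\!] \in [0,1]^{2^{\mathsf{Pk}}\times 2^{\mathsf{Pk}}}$, with $[\varphi]\in\{0,1\}$ the Iverson bracket: $\mathcal{B}[\![\mathsf{false}]\!]_{ab}=[b=\emptyset]$; $\mathcal{B}[\![\mathsf{true}]\!]_{ab}=[a=b]$; $\mathcal{B}[\![f=n]\!]_{ab}=[b=\{\pi\in a : \pi.f=n\}]$; $\mathcal{B}[\![\neg t]\!]_{ab}=[b\subseteq a]\cdot \mathcal{B}[\![t]\!]_{a,a-b}$;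 $\mathcal{B}[\![f\leftarrow n]\!]_{ab}=[b=\{\pi[f:=n] : \pi\in a\}]$; $\mathcal{B}[\![p \,\&\, q]\!]_{ab}=\sum_{c,d}[c\cup d=b]\,\mathcal{B}[\![p]\!]_{ac}\,\mathcal{B}[\![q]\!]_{ad}$; $\mathcal{B}[\![p;q]\!]=\mathcal{B}[\![p]\!]\cdot\mathcal{B}[\![q]\!]$ (matrix product); $\mathcal{B}[\![p\oplus_r q]\!]=r\,\mathcal{B}[\![p]\!]+(1-r)\,\mathcal{B}[\![q]\!]$; $\mathcal{B}[\![p^*]\!]_{ab}=\lim_{n\to\infty}\mathcal{B}[\![p^{(n)}]\!]_{ab}$. Conjunction $t;u$ and disjunction $t\,\&\,u$ of predicates are interpreted as the corresponding program constructs. Denotational semantics: for a finite set $X$, $\mathcal{D}(X)$ is the set of probability distributions on $X$; $\delta_x$ is the Dirac distribution at $x$; for $g:X\to Y$, $\mathcal{D}(g)(\mu)=\mu\circ g^{-1}$ (pushforward); for $g:X\to\mathcal{D}(Y)$, $g^\dagger(\mu)(A)=\sum_{x\in X} g(x)(A)\,\mu(x)$; $\mu\times\nu$ is the product distribution. Order distributions on $2^{\mathsf{Pk}}$ by $\mu\sqsubseteq\nu$ iff $\mu(\{b : a\subseteq b\})\le\nu(\{b: a\subseteq b\})$ for all $a\subseteq\mathsf{Pk}$. Then $[\![p]\!]:2^{\mathsf{Pk}}\to\mathcal{D}(2^{\mathsf{Pk}})$ is: $[\![\mathsf{false}]\!](a)=\delta_\emptyset$; $[\![\mathsf{true}]\!](a)=\delta_a$;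 $[\![f=n]\!](a)=\delta_{\{\pi\in a:\pi.f=n\}}$; $[\![f\leftarrow n]\!](a)=\delta_{\{\pi[f:=n]:\pi\in a\}}$; $[\![\neg t]\!](a)=\mathcal{D}(\lambda b.\,a-b)([\![t]\!](a))$; $[\![p\,\&\,q]\!](a)=\mathcal{D}(\cup)([\![p]\!](a)\times[\![q]\!](a))$; $[\![p;q]\!](a)=[\![q]\!]^\dagger([\![p]\!](a))$; $[\![p\oplus_r q]\!](a)=r[\![p]\!](a)+(1-r)[\![q]\!](a)$; $[\![p^*]\!](a)=\bigsqcup_{n\in\mathbb{N}}[\![p^{(n)}]\!](a)$, the supremum of the $\sqsubseteq$-increasing chain. *)

theory Defs
  imports "HOL-Probability.Probability_Mass_Function"
begin

type_synonym 'f packet = "'f \<Rightarrow> nat"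

definition Pk :: "('f \<Rightarrow> nat set) \<Rightarrow> 'f packet set" where
  "Pk rng = {\<pi>. \<forall>f. \<pi> f \<in> rng f}"

datatype 'f pred =
    PFalse
  | PTrue
  | PTest 'f nat
  | POr "'f pred" "'f pred"
  | PAnd "'f pred" "'f pred"
  | PNot "'f pred"

datatype 'f prog =
    Filter "'f pred"
  | Assign 'f nat
  | Par "'f prog" "'f prog"
  | Seq "'f prog" "'f prog"
  | Choice rat "'f prog" "'f prog"
  | Star "'f prog"

fun iter :: "'f prog \<Rightarrow> nat \<Rightarrow> 'f prog" where
  "iter p 0 = Filter PTrue"
| "iter p (Suc n) = Par (Filter PTrue) (Seq p (iter p n))"

fun wf_prog :: "('f \<Rightarrow> nat set) \<Rightarrow> 'f prog \<Rightarrow> bool" where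
  "wf_prog rng (Filter t) = True"
| "wf_prog rng (Assign f n) = (n \<in> rng f)"
| "wf_prog rng (Par p q) = (wf_prog rng p \<and> wf_prog rng q)"
| "wf_prog rng (Seq p q) = (wf_prog rng p \<and> wf_prog rng q)"
| "wf_prog rng (Choice r p q) = (0 \<le> r \<and> r \<le> 1 \<and> wf_prog rng p \<and> wf_prog rng q)"
| "wf_prog rng (Star p) = wf_prog rng p"

fun star_bodies :: "'f prog \<Rightarrow> 'f prog set" where
  "star_bodies (Filter t) = {}"
| "star_bodies (Assign f n) = {}"
| "star_bodies (Par p q) = star_bodies p \<union> star_bodies q"
| "star_bodies (Seq p q) = star_bodies p \<union> star_bodies q"
| "star_bodies (Choice r p q) = star_bodies p \<union> star_bodies q"
| "star_bodies (Star p) = insert p (star_bodies p)"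

text \<open>Matrices indexed by subsets of P (the packet set); entries outside Pow P are irrelevant.\<close>
type_synonym 'f mat = "'f packet set \<Rightarrow> 'f packet set \<Rightarrow> real"

definition mId :: "'f mat" where
  "mId a b = of_bool (a = b)"

definition mUnion :: "'f packet set \<Rightarrow> 'f mat \<Rightarrow> 'f mat \<Rightarrow> 'f mat" where
  "mUnion P M N a b = (\<Sum>c\<in>Pow P. \<Sum>d\<in>Pow P. of_bool (c \<union> d = b) * M a c * N a d)"

definition mSeq :: "'f packet set \<Rightarrow> 'f mat \<Rightarrow> 'f mat \<Rightarrow> 'f mat" where
  "mSeq P M N a b = (\<Sum>c\<in>Pow P. M a c * N c b)"

definition mChoice :: "real \<Rightarrow> 'f mat \<Rightarrow> 'f mat \<Rightarrow> 'f mat" where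
  "mChoice r M N a b = r * M a b + (1 - r) * N a b"

fun mPow :: "'f packet set \<Rightarrow> 'f mat \<Rightarrow> nat \<Rightarrow> 'f mat" where
  "mPow P M 0 = mId"
| "mPow P M (Suc n) = mUnion P mId (mSeq P M (mPow P M n))"

fun Bpred :: "'f packet set \<Rightarrow> 'f pred \<Rightarrow> 'f mat" where
  "Bpred P PFalse a b = of_bool (b = {})"
| "Bpred P PTrue a b = mId a b"
| "Bpred P (PTest f n) a b = of_bool (b = {\<pi>\<in>a. \<pi> f = n})"
| "Bpred P (POr t u) a b = mUnion P (Bpred P t) (Bpred P u) a b"
| "Bpred P (PAnd t u) a b = mSeq P (Bpred P t) (Bpred P u) a b"
| "Bpred P (PNot t) a b = of_bool (b \<subseteq> a) * Bpred P t a (a - b)"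

fun B :: "'f packet set \<Rightarrow> 'f prog \<Rightarrow> 'f mat" where
  "B P (Filter t) = Bpred P t"
| "B P (Assign f n) = (\<lambda>a b. of_bool (b = (\<lambda>\<pi>. \<pi>(f := n)) ` a))"
| "B P (Par p q) = mUnion P (B P p) (B P q)"
| "B P (Seq p q) = mSeq P (B P p) (B P q)"
| "B P (Choice r p q) = mChoice (of_rat r) (B P p) (B P q)"
| "B P (Star p) = (\<lambda>a b. lim (\<lambda>n. mPow P (B P p) n a b))"

type_synonym 'f den = "'f packet set \<Rightarrow> 'f packet set pmf"

definition dUnion :: "'f den \<Rightarrow> 'f den \<Rightarrow> 'f den" where
  "dUnion D E a = map_pmf (\<lambda>(x, y). x \<union> y) (pair_pmf (D a) (E a))"

definition dSeq :: "'f den \<Rightarrow> 'f den \<Rightarrow> 'f den" where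
  "dSeq D E a = bind_pmf (D a) E"

definition dChoice :: "real \<Rightarrow> 'f den \<Rightarrow> 'f den \<Rightarrow> 'f den" where
  "dChoice r D E a = bind_pmf (bernoulli_pmf r) (\<lambda>c. if c then D a else E a)"

fun dPow :: "'f den \<Rightarrow> nat \<Rightarrow> 'f den" where
  "dPow D 0 = return_pmf"
| "dPow D (Suc n) = dUnion return_pmf (dSeq D (dPow D n))"

definition dle :: "'f packet set \<Rightarrow> 'f packet set pmf \<Rightarrow> 'f packet set pmf \<Rightarrow> bool" where
  "dle P \<mu> \<nu> \<longleftrightarrow> (\<forall>a. a \<subseteq> P \<longrightarrow>
      measure_pmf.prob \<mu> {b. a \<subseteq> b} \<le> measure_pmf.prob \<nu> {b. a \<subseteq> b})"

definition dsup :: "'f packet set \<Rightarrow> (nat \<Rightarrow> 'f packet set pmf) \<Rightarrow> 'f packet set pmf" where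
  "dsup P ch = (THE \<mu>. set_pmf \<mu> \<subseteq> Pow P \<and> (\<forall>n. dle P (ch n) \<mu>) \<and>
       (\<forall>\<nu>. set_pmf \<nu> \<subseteq> Pow P \<and> (\<forall>n. dle P (ch n) \<nu>) \<longrightarrow> dle P \<mu> \<nu>))"

fun dpred :: "'f pred \<Rightarrow> 'f den" where
  "dpred PFalse a = return_pmf {}"
| "dpred PTrue a = return_pmf a"
| "dpred (PTest f n) a = return_pmf {\<pi>\<in>a. \<pi> f = n}"
| "dpred (POr t u) a = dUnion (dpred t) (dpred u) a"
| "dpred (PAnd t u) a = dSeq (dpred t) (dpred u) a"
| "dpred (PNot t) a = map_pmf (\<lambda>b. a - b) (dpred t a)"

fun den :: "'f packet set \<Rightarrow> 'f prog \<Rightarrow> 'f den" where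
  "den P (Filter t) = dpred t"
| "den P (Assign f n) = (\<lambda>a. return_pmf ((\<lambda>\<pi>. \<pi>(f := n)) ` a))"
| "den P (Par p q) = dUnion (den P p) (den P q)"
| "den P (Seq p q) = dSeq (den P p) (den P q)"
| "den P (Choice r p q) = dChoice (of_rat r) (den P p) (den P q)"
| "den P (Star p) = (\<lambda>a. dsup P (\<lambda>n. dPow (den P p) n a))"

end

theory Submission
  imports Defs
begin

text \<open>Both semantics are compositional, and every matrix operation is the matrix of the
  corresponding monadic combinator on distributions over subsets of \<open>P\<close>. Hence a structural
  induction shows that the matrix of \<open>p\<close> has the entries \<open>\<lbrakk>p\<rbrakk>(a)({b})\<close>, provided all
  distributions involved are supported on subsets of \<open>P\<close>. The only non-trivial case is
  iteration. The approximants \<open>\<lbrakk>p\<^sup>(\<^sup>n\<^sup>)\<rbrakk>(a)\<close> increase in the probabilities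
  \<open>\<mu> {b. c \<subseteq> b}\<close> of up-sets, which therefore converge. On the finite lattice of subsets of \<open>P\<close>
  point masses are recovered from up-set probabilities by Moebius inversion,
  \<open>\<mu> {b} = \<mu> {c. b \<subseteq> c} - (\<Sum>c \<supset> b. \<mu> {c})\<close>, so by induction on \<open>card (P - b)\<close> the
  matrix entries converge too, and their limit is a distribution that is the least upper bound
  of the chain.\<close>

definition up_prob :: "'a set pmf \<Rightarrow> 'a set \<Rightarrow> real" where
  "up_prob \<mu> a = measure_pmf.prob \<mu> {b. a \<subseteq> b}"

lemma dle_iff_up_prob: "dle P \<mu> \<nu> \<longleftrightarrow> (\<forall>a. a \<subseteq> P \<longrightarrow> up_prob \<mu> a \<le> up_prob \<nu> a)"
  by (simp add: dle_def up_prob_def)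

lemma measure_pmf_prob_finite_support:
  assumes "finite S" "set_pmf \<mu> \<subseteq> S"
  shows "measure_pmf.prob \<mu> A = sum (pmf \<mu>) (A \<inter> S)"
proof -
  have "measure_pmf.prob \<mu> A = measure_pmf.prob \<mu> (A \<inter> set_pmf \<mu>)"
    by (rule measure_Int_set_pmf[symmetric])
  also have "A \<inter> set_pmf \<mu> = (A \<inter> S) \<inter> set_pmf \<mu>"
    using assms(2) by blast
  also have "measure_pmf.prob \<mu> \<dots> = sum (pmf \<mu>) (A \<inter> S)"
    using assms(1) by (simp add: measure_Int_set_pmf measure_measure_pmf_finite)
  finally show ?thesis .
qed

lemma pmf_bind_pmf_finite_support:
  assumes "finite S" "set_pmf \<mu> \<subseteq> S"
  shows "pmf (bind_pmf \<mu> K) b = (\<Sum>c\<in>S. pmf \<mu> c * pmf (K c) b)"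
  unfolding pmf_bind
  by (subst integral_measure_pmf_real[where A=S]) (use assms in \<open>auto simp: mult.commute\<close>)

lemma finite_superset_induct [consumes 2, case_names step]:
  assumes "finite P" "b \<subseteq> P"
    and "\<And>b. b \<subseteq> P \<Longrightarrow> (\<And>c. c \<subseteq> P \<Longrightarrow> b \<subset> c \<Longrightarrow> Q c) \<Longrightarrow> Q b"
  shows "Q b"
  using assms(2)
proof (induction b rule: measure_induct_rule[of "\<lambda>b. card (P - b)"])
  case (less b)
  show ?case
  proof (rule assms(3)[OF less.prems])
    fix c assume "c \<subseteq> P" "b \<subset> c"
    moreover from this have "card (P - c) < card (P - b)"
      using assms(1) by (intro psubset_card_mono) auto
    ultimately show "Q c" by (intro less.IH)
  qed
qed

lemma pmf_eq_up_prob_minus_supersets: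
  assumes "finite P" "set_pmf \<mu> \<subseteq> Pow P" "b \<subseteq> P"
  shows "pmf \<mu> b = up_prob \<mu> b - (\<Sum>c | c \<subseteq> P \<and> b \<subset> c. pmf \<mu> c)"
proof -
  have "up_prob \<mu> b = sum (pmf \<mu>) {c. c \<subseteq> P \<and> b \<subseteq> c}"
    unfolding up_prob_def
      measure_pmf_prob_finite_support[OF finite_Pow_iff[THEN iffD2, OF assms(1)] assms(2)]
    by (rule arg_cong[where f="sum _"]) auto
  also have "{c. c \<subseteq> P \<and> b \<subseteq> c} = insert b {c. c \<subseteq> P \<and> b \<subset> c}"
    using assms(3) by auto
  also have "sum (pmf \<mu>) \<dots> = pmf \<mu> b + (\<Sum>c | c \<subseteq> P \<and> b \<subset> c. pmf \<mu> c)"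
    using assms(1) by (subst sum.insert) auto
  finally show ?thesis by simp
qed

lemma pmf_eqI_up_prob:
  assumes "finite P" "set_pmf \<mu> \<subseteq> Pow P" "set_pmf \<nu> \<subseteq> Pow P"
    and "\<And>a. a \<subseteq> P \<Longrightarrow> up_prob \<mu> a = up_prob \<nu> a"
  shows "\<mu> = \<nu>"
proof (rule pmf_eqI)
  fix b
  show "pmf \<mu> b = pmf \<nu> b"
  proof (cases "b \<subseteq> P")
    case True
    with assms(1) show ?thesis
    proof (induction b rule: finite_superset_induct)
      case (step b)
      then have "(\<Sum>c | c \<subseteq> P \<and> b \<subset> c. pmf \<mu> c) = (\<Sum>c | c \<subseteq> P \<and> b \<subset> c. pmf \<nu> c)"
        by (intro sum.cong) auto
      then show ?case
        using pmf_eq_up_prob_minus_supersets[OF assms(1,2) step(1)]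
          pmf_eq_up_prob_minus_supersets[OF assms(1,3) step(1)] assms(4)[OF step(1)] by simp
    qed
  next
    case False
    then have "b \<notin> set_pmf \<mu>" "b \<notin> set_pmf \<nu>" using assms(2,3) by auto
    then show ?thesis by (simp add: set_pmf_iff)
  qed
qed

lemma dle_antisym:
  assumes "finite P" "set_pmf \<mu> \<subseteq> Pow P" "set_pmf \<nu> \<subseteq> Pow P" "dle P \<mu> \<nu>" "dle P \<nu> \<mu>"
  shows "\<mu> = \<nu>"
proof (rule pmf_eqI_up_prob[OF assms(1-3)])
  fix a assume "a \<subseteq> P"
  then have "up_prob \<mu> a \<le> up_prob \<nu> a" "up_prob \<nu> a \<le> up_prob \<mu> a"
    using assms(4,5) by (simp_all add: dle_iff_up_prob)
  then show "up_prob \<mu> a = up_prob \<nu> a" by linarith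
qed

lemma convergent_pmf_if_convergent_up_prob:
  assumes "finite P" "\<And>n. set_pmf (\<mu> n) \<subseteq> Pow P"
    and "\<And>a. a \<subseteq> P \<Longrightarrow> convergent (\<lambda>n. up_prob (\<mu> n) a)"
  shows "convergent (\<lambda>n. pmf (\<mu> n) b)"
proof (cases "b \<subseteq> P")
  case True
  with assms(1) show ?thesis
  proof (induction b rule: finite_superset_induct)
    case (step b)
    then have "convergent (\<lambda>n. up_prob (\<mu> n) b - (\<Sum>c | c \<subseteq> P \<and> b \<subset> c. pmf (\<mu> n) c))"
      by (intro convergent_diff assms(3) convergent_sum) auto
    then show ?case
      using pmf_eq_up_prob_minus_supersets[OF assms(1,2) step(1)] by simp
  qed
next
  case False
  then have "b \<notin> set_pmf (\<mu> n)" for n using assms(2) by auto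
  then show ?thesis by (simp add: set_pmf_iff convergent_const)
qed

lemma pmf_limit_finite_support:
  assumes "finite S" "\<And>n. set_pmf (\<mu> n) \<subseteq> S" "\<And>b. convergent (\<lambda>n. pmf (\<mu> n) b)"
  obtains \<nu> where "set_pmf \<nu> \<subseteq> S" "\<And>b. (\<lambda>n. pmf (\<mu> n) b) \<longlonglongrightarrow> pmf \<nu> b"
proof -
  define f where "f b = lim (\<lambda>n. pmf (\<mu> n) b)" for b
  have f: "(\<lambda>n. pmf (\<mu> n) b) \<longlonglongrightarrow> f b" for b
    using assms(3) by (simp add: f_def convergent_LIMSEQ_iff)
  have f_nonneg: "0 \<le> f b" for b
    by (rule LIMSEQ_le_const[OF f]) simp
  have f_outside: "f b = 0" if "b \<notin> S" for b
  proof -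
    have "b \<notin> set_pmf (\<mu> n)" for n using assms(2) that by blast
    with f[of b] have "(\<lambda>n. 0) \<longlonglongrightarrow> f b" by (simp add: set_pmf_iff)
    then have "0 = f b" by (rule LIMSEQ_unique[OF tendsto_const])
    then show ?thesis by simp
  qed
  have "(\<lambda>n. \<Sum>b\<in>S. pmf (\<mu> n) b) \<longlonglongrightarrow> (\<Sum>b\<in>S. f b)"
    by (intro tendsto_sum f)
  moreover have "(\<lambda>n. \<Sum>b\<in>S. pmf (\<mu> n) b) = (\<lambda>n. 1)"
    using assms(1,2) by (simp add: sum_pmf_eq_1)
  ultimately have "(\<Sum>b\<in>S. f b) = 1"
    using LIMSEQ_unique[OF _ tendsto_const] by simp
  moreover have "(\<integral>\<^sup>+b. ennreal (f b) \<partial>count_space UNIV) = (\<Sum>b\<in>S. ennreal (f b))"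
    using assms(1) f_outside by (intro nn_integral_count_space') auto
  ultimately have "(\<integral>\<^sup>+b. ennreal (f b) \<partial>count_space UNIV) = 1"
    using f_nonneg by (simp add: sum_ennreal)
  then have pmf_embed: "pmf (embed_pmf f) b = f b" for b
    by (rule pmf_embed_pmf[OF f_nonneg])
  show ?thesis
  proof
    show "set_pmf (embed_pmf f) \<subseteq> S"
    proof
      fix b assume "b \<in> set_pmf (embed_pmf f)"
      then have "f b \<noteq> 0" by (simp add: set_pmf_iff pmf_embed)
      then show "b \<in> S" using f_outside by auto
    qed
    show "(\<lambda>n. pmf (\<mu> n) b) \<longlonglongrightarrow> pmf (embed_pmf f) b" for b
      using f by (simp add: pmf_embed)
  qed
qed

lemma tendsto_measure_pmf_finite_support:
  assumes "finite S" "\<And>n. set_pmf (\<mu> n) \<subseteq> S" "set_pmf \<nu> \<subseteq> S"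
    and "\<And>b. (\<lambda>n. pmf (\<mu> n) b) \<longlonglongrightarrow> pmf \<nu> b"
  shows "(\<lambda>n. measure_pmf.prob (\<mu> n) A) \<longlonglongrightarrow> measure_pmf.prob \<nu> A"
  unfolding measure_pmf_prob_finite_support[OF assms(1) assms(2)]
    measure_pmf_prob_finite_support[OF assms(1) assms(3)]
  using assms(1) by (intro tendsto_sum assms(4))

lemma dsup_eqI:
  assumes "finite P" "set_pmf \<nu> \<subseteq> Pow P"
    and "\<And>n a. a \<subseteq> P \<Longrightarrow> up_prob (\<mu> n) a \<le> up_prob (\<mu> (Suc n)) a"
    and "\<And>a. a \<subseteq> P \<Longrightarrow> (\<lambda>n. up_prob (\<mu> n) a) \<longlonglongrightarrow> up_prob \<nu> a"
  shows "dsup P \<mu> = \<nu>"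
proof -
  have upper: "dle P (\<mu> n) \<nu>" for n
    unfolding dle_iff_up_prob
  proof (intro allI impI)
    fix a assume a: "a \<subseteq> P"
    show "up_prob (\<mu> n) a \<le> up_prob \<nu> a"
      by (rule incseq_le[OF incseq_SucI[of "\<lambda>n. up_prob (\<mu> n) a", OF assms(3)[OF a]] assms(4)[OF a]])
  qed
  have least: "dle P \<nu> \<rho>" if "\<forall>n. dle P (\<mu> n) \<rho>" for \<rho>
    unfolding dle_iff_up_prob
  proof (intro allI impI)
    fix a assume a: "a \<subseteq> P"
    with that have "\<forall>n. up_prob (\<mu> n) a \<le> up_prob \<rho> a"
      by (simp add: dle_iff_up_prob)
    then show "up_prob \<nu> a \<le> up_prob \<rho> a"
      by (intro LIMSEQ_le_const2[OF assms(4)[OF a]]) simp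
  qed
  show ?thesis
    unfolding dsup_def
  proof (rule the_equality)
    show "set_pmf \<nu> \<subseteq> Pow P \<and> (\<forall>n. dle P (\<mu> n) \<nu>) \<and>
        (\<forall>\<rho>. set_pmf \<rho> \<subseteq> Pow P \<and> (\<forall>n. dle P (\<mu> n) \<rho>) \<longrightarrow> dle P \<nu> \<rho>)"
      by (simp add: assms(2) upper least)
    fix \<rho>
    assume "set_pmf \<rho> \<subseteq> Pow P \<and> (\<forall>n. dle P (\<mu> n) \<rho>) \<and>
        (\<forall>\<rho>'. set_pmf \<rho>' \<subseteq> Pow P \<and> (\<forall>n. dle P (\<mu> n) \<rho>') \<longrightarrow> dle P \<rho> \<rho>')"
    then have \<rho>: "set_pmf \<rho> \<subseteq> Pow P" "\<forall>n. dle P (\<mu> n) \<rho>" "dle P \<rho> \<nu>"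
      using assms(2) upper by simp_all
    show "\<rho> = \<nu>"
      by (rule dle_antisym[OF assms(1) \<rho>(1) assms(2) \<rho>(3) least[OF \<rho>(2)]])
  qed
qed

lemma
  assumes "finite P" "\<And>n. set_pmf (\<mu> n) \<subseteq> Pow P"
    and "\<And>n a. up_prob (\<mu> n) a \<le> up_prob (\<mu> (Suc n)) a"
  shows set_pmf_dsup_chain: "set_pmf (dsup P \<mu>) \<subseteq> Pow P"
    and pmf_tendsto_dsup_chain: "(\<lambda>n. pmf (\<mu> n) b) \<longlonglongrightarrow> pmf (dsup P \<mu>) b"
proof -
  have "convergent (\<lambda>n. up_prob (\<mu> n) a)" for a
  proof (rule Bseq_mono_convergent)
    show "Bseq (\<lambda>n. up_prob (\<mu> n) a)"
      by (rule BseqI'[where K=1]) (simp add: up_prob_def)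
    show "\<forall>m n. m \<le> n \<longrightarrow> up_prob (\<mu> m) a \<le> up_prob (\<mu> n) a"
      using incseq_SucI[of "\<lambda>n. up_prob (\<mu> n) a"] assms(3) by (auto simp: incseq_def)
  qed
  then have "convergent (\<lambda>n. pmf (\<mu> n) b)" for b
    by (intro convergent_pmf_if_convergent_up_prob[OF assms(1,2)])
  then obtain \<nu> where \<nu>: "set_pmf \<nu> \<subseteq> Pow P" "\<And>b. (\<lambda>n. pmf (\<mu> n) b) \<longlonglongrightarrow> pmf \<nu> b"
    using pmf_limit_finite_support[of "Pow P" \<mu>] assms(1,2) by blast
  have "(\<lambda>n. up_prob (\<mu> n) a) \<longlonglongrightarrow> up_prob \<nu> a" for a
    unfolding up_prob_def using assms(1,2) \<nu>
    by (intro tendsto_measure_pmf_finite_support[of "Pow P"]) auto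
  then have "dsup P \<mu> = \<nu>"
    using assms(3) by (intro dsup_eqI[OF assms(1) \<nu>(1)])
  then show "set_pmf (dsup P \<mu>) \<subseteq> Pow P" "(\<lambda>n. pmf (\<mu> n) b) \<longlonglongrightarrow> pmf (dsup P \<mu>) b"
    using \<nu> by simp_all
qed

lemma dPow_Suc_eq: "dPow D (Suc n) a = map_pmf ((\<union>) a) (bind_pmf (D a) (dPow D n))"
  by (simp add: dUnion_def dSeq_def pair_return_pmf1 map_pmf_comp)

text \<open>Monotonicity is proved for \<open>emeasure\<close> rather than \<open>measure\<close>, so that the monotonicity
  of the integral needs no integrability side conditions.\<close>

lemma emeasure_dPow_Suc_up:
  "emeasure (dPow D (Suc n) a) {b. c \<subseteq> b} = (\<integral>\<^sup>+x. emeasure (dPow D n x) {b. c - a \<subseteq> b} \<partial>D a)"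
proof -
  have "((\<union>) a) -` {b. c \<subseteq> b} = {b. c - a \<subseteq> b}" by auto
  then show ?thesis
    by (simp only: dPow_Suc_eq[of D n a] emeasure_map_pmf emeasure_bind_pmf)
qed

lemma emeasure_dPow_up_mono:
  "emeasure (dPow D n a) {b. c \<subseteq> b} \<le> emeasure (dPow D (Suc n) a) {b. c \<subseteq> b}"
proof (induction n arbitrary: a c)
  case 0
  show ?case
  proof (cases "c \<subseteq> a")
    case True
    then have "{b. c - a \<subseteq> b} = UNIV" by auto
    then show ?thesis
      unfolding emeasure_dPow_Suc_up by (simp split: split_indicator)
  qed simp
next
  case (Suc n)
  show ?case
    unfolding emeasure_dPow_Suc_up[of D "Suc n" a] emeasure_dPow_Suc_up[of D n a]
    by (rule nn_integral_mono) (rule Suc.IH)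
qed

lemma up_prob_dPow_mono: "up_prob (dPow D n a) c \<le> up_prob (dPow D (Suc n) a) c"
  using emeasure_dPow_up_mono[of D n a c]
  by (simp add: up_prob_def measure_pmf.emeasure_eq_measure)

text \<open>The support condition lets the sums over \<open>Pow P\<close> in the matrix operations exhaust
  the whole mass of the corresponding distributions.\<close>

definition represents :: "'f packet set \<Rightarrow> 'f mat \<Rightarrow> 'f den \<Rightarrow> bool" where
  "represents P M D \<longleftrightarrow>
     (\<forall>a \<subseteq> P. set_pmf (D a) \<subseteq> Pow P \<and> (\<forall>b \<subseteq> P. M a b = pmf (D a) b))"

lemma representsI:
  assumes "\<And>a. a \<subseteq> P \<Longrightarrow> set_pmf (D a) \<subseteq> Pow P"
    and "\<And>a b. a \<subseteq> P \<Longrightarrow> b \<subseteq> P \<Longrightarrow> M a b = pmf (D a) b"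
  shows "represents P M D"
  using assms by (simp add: represents_def)

lemma
  assumes "represents P M D" "a \<subseteq> P"
  shows represents_set_pmf: "set_pmf (D a) \<subseteq> Pow P"
    and represents_entry: "b \<subseteq> P \<Longrightarrow> M a b = pmf (D a) b"
  using assms by (simp_all add: represents_def)

lemma represents_mId: "represents P mId return_pmf"
  by (rule representsI) (auto simp: mId_def indicator_def)

lemma represents_mSeq:
  assumes "finite P" "represents P M D" "represents P N E"
  shows "represents P (mSeq P M N) (dSeq D E)"
proof (rule representsI)
  fix a assume a: "a \<subseteq> P"
  show "set_pmf (dSeq D E a) \<subseteq> Pow P"
    using represents_set_pmf[OF assms(2) a] represents_set_pmf[OF assms(3)]
    by (auto simp: dSeq_def)
  fix b assume b: "b \<subseteq> P"
  show "mSeq P M N a b = pmf (dSeq D E a) b"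
    unfolding mSeq_def dSeq_def
      pmf_bind_pmf_finite_support[OF finite_Pow_iff[THEN iffD2, OF assms(1)]
        represents_set_pmf[OF assms(2) a]]
    using represents_entry[OF assms(2) a] represents_entry[OF assms(3) _ b]
    by (intro sum.cong) auto
qed

lemma dUnion_eq_bind:
  "dUnion D E a = bind_pmf (D a) (\<lambda>c. bind_pmf (E a) (\<lambda>d. return_pmf (c \<union> d)))"
  unfolding dUnion_def pair_pmf_def map_bind_pmf by (simp add: map_return_pmf)

lemma represents_mUnion:
  assumes "finite P" "represents P M D" "represents P N E"
  shows "represents P (mUnion P M N) (dUnion D E)"
proof (rule representsI)
  fix a assume a: "a \<subseteq> P"
  note supp = represents_set_pmf[OF assms(2) a] represents_set_pmf[OF assms(3) a]
  show "set_pmf (dUnion D E a) \<subseteq> Pow P"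
    using supp by (auto simp: dUnion_eq_bind)
  fix b assume b: "b \<subseteq> P"
  have "pmf (dUnion D E a) b
      = (\<Sum>c\<in>Pow P. pmf (D a) c * (\<Sum>d\<in>Pow P. pmf (E a) d * of_bool (c \<union> d = b)))"
    unfolding dUnion_eq_bind
      pmf_bind_pmf_finite_support[OF finite_Pow_iff[THEN iffD2, OF assms(1)] supp(1)]
      pmf_bind_pmf_finite_support[OF finite_Pow_iff[THEN iffD2, OF assms(1)] supp(2)]
    by (simp add: indicator_def of_bool_def)
  also have "\<dots> = mUnion P M N a b"
    unfolding mUnion_def sum_distrib_left
    using represents_entry[OF assms(2) a] represents_entry[OF assms(3) a]
    by (intro sum.cong) (auto simp: mult_ac)
  finally show "mUnion P M N a b = pmf (dUnion D E a) b" ..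
qed

lemma represents_mChoice:
  assumes "represents P M D" "represents P N E" "0 \<le> r" "r \<le> 1"
  shows "represents P (mChoice r M N) (dChoice r D E)"
proof (rule representsI)
  fix a assume a: "a \<subseteq> P"
  have "set_pmf (dChoice r D E a) \<subseteq> set_pmf (D a) \<union> set_pmf (E a)"
    by (auto simp: dChoice_def split: if_splits)
  then show "set_pmf (dChoice r D E a) \<subseteq> Pow P"
    using represents_set_pmf[OF assms(1) a] represents_set_pmf[OF assms(2) a] by blast
  fix b assume b: "b \<subseteq> P"
  have "pmf (dChoice r D E a) b = r * pmf (D a) b + (1 - r) * pmf (E a) b"
    unfolding dChoice_def pmf_bind
    using assms(3,4) by (subst integral_measure_pmf_real[where A=UNIV]) (auto simp: UNIV_bool)
  then show "mChoice r M N a b = pmf (dChoice r D E a) b"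
    using represents_entry[OF assms(1) a b] represents_entry[OF assms(2) a b]
    by (simp add: mChoice_def)
qed

lemma represents_mPow:
  assumes "finite P" "represents P M D"
  shows "represents P (mPow P M n) (dPow D n)"
proof (induction n)
  case 0
  show ?case by (simp add: represents_mId)
next
  case (Suc n)
  show ?case
    unfolding mPow.simps dPow.simps
    by (intro represents_mUnion represents_mSeq represents_mId assms Suc.IH)
qed

lemma
  assumes "finite P" "represents P M D" "a \<subseteq> P"
  shows set_pmf_dsup_dPow: "set_pmf (dsup P (\<lambda>n. dPow D n a)) \<subseteq> Pow P"
    and mPow_tendsto_dsup_dPow:
      "b \<subseteq> P \<Longrightarrow> (\<lambda>n. mPow P M n a b) \<longlonglongrightarrow> pmf (dsup P (\<lambda>n. dPow D n a)) b"
proof -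
  have supp: "set_pmf (dPow D n a) \<subseteq> Pow P" for n
    using represents_set_pmf[OF represents_mPow[OF assms(1,2)] assms(3)] .
  show "set_pmf (dsup P (\<lambda>n. dPow D n a)) \<subseteq> Pow P"
    using set_pmf_dsup_chain[of P "\<lambda>n. dPow D n a", OF assms(1) supp up_prob_dPow_mono] .
  assume b: "b \<subseteq> P"
  show "(\<lambda>n. mPow P M n a b) \<longlonglongrightarrow> pmf (dsup P (\<lambda>n. dPow D n a)) b"
    using pmf_tendsto_dsup_chain[of P "\<lambda>n. dPow D n a", OF assms(1) supp up_prob_dPow_mono]
      represents_entry[OF represents_mPow[OF assms(1,2)] assms(3) b]
    by simp
qed

lemma represents_Star:
  assumes "finite P" "represents P M D"
  shows "represents P (\<lambda>a b. lim (\<lambda>n. mPow P M n a b)) (\<lambda>a. dsup P (\<lambda>n. dPow D n a))"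
  using set_pmf_dsup_dPow[OF assms] limI[OF mPow_tendsto_dsup_dPow[OF assms]]
  by (intro representsI) auto

lemma set_pmf_dpred: "set_pmf (dpred t a) \<subseteq> Pow a"
proof (induction t arbitrary: a)
  case (POr t u)
  then show ?case by (fastforce simp: dUnion_eq_bind)
next
  case (PAnd t u)
  then show ?case by (fastforce simp: dSeq_def)
qed auto

lemma pmf_map_pmf_diff:
  assumes "set_pmf \<mu> \<subseteq> Pow a"
  shows "pmf (map_pmf (\<lambda>c. a - c) \<mu>) b = of_bool (b \<subseteq> a) * pmf \<mu> (a - b)"
proof -
  have "pmf (map_pmf (\<lambda>c. a - c) \<mu>) b = measure_pmf.prob \<mu> ((\<lambda>c. a - c) -` {b} \<inter> set_pmf \<mu>)"
    by (simp add: pmf_map measure_Int_set_pmf)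
  also have "(\<lambda>c. a - c) -` {b} \<inter> set_pmf \<mu> = (if b \<subseteq> a then {a - b} else {}) \<inter> set_pmf \<mu>"
    using assms by auto
  also have "measure_pmf.prob \<mu> \<dots> = of_bool (b \<subseteq> a) * pmf \<mu> (a - b)"
    by (simp add: measure_Int_set_pmf measure_pmf_single)
  finally show ?thesis .
qed

lemma represents_Bpred:
  assumes "finite P"
  shows "represents P (Bpred P t) (dpred t)"
proof (induction t)
  case (POr t u)
  have "Bpred P (POr t u) = mUnion P (Bpred P t) (Bpred P u)"
    and "dpred (POr t u) = dUnion (dpred t) (dpred u)"
    by (intro ext; simp)+
  then show ?case using represents_mUnion[OF assms POr.IH] by simp
next
  case (PAnd t u)
  have "Bpred P (PAnd t u) = mSeq P (Bpred P t) (Bpred P u)"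
    and "dpred (PAnd t u) = dSeq (dpred t) (dpred u)"
    by (intro ext; simp)+
  then show ?case using represents_mSeq[OF assms PAnd.IH] by simp
next
  case (PNot t)
  show ?case
  proof (rule representsI)
    fix a assume a: "a \<subseteq> P"
    then show "set_pmf (dpred (PNot t) a) \<subseteq> Pow P" by auto
    have "a - b \<subseteq> P" for b using a by blast
    then show "Bpred P (PNot t) a b = pmf (dpred (PNot t) a) b" for b
      using represents_entry[OF PNot.IH a] by (simp add: pmf_map_pmf_diff[OF set_pmf_dpred])
  qed
qed (auto intro!: representsI simp: mId_def indicator_def)

lemma finite_Pk:
  assumes "\<forall>f. finite (rng f)"
  shows "finite (Pk (rng :: 'f::finite \<Rightarrow> nat set))"
proof -
  have "Pk rng = PiE UNIV rng" by (auto simp: Pk_def PiE_def Pi_def extensional_def)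
  then show ?thesis using assms by (simp add: finite_PiE)
qed

lemma wf_prog_star_bodies: "wf_prog rng p \<Longrightarrow> q \<in> star_bodies p \<Longrightarrow> wf_prog rng q"
  by (induction p) auto

lemma B_iter: "B P (iter q n) = mPow P (B P q) n"
proof (induction n)
  case (Suc n)
  have "Bpred P PTrue = mId" by (intro ext) simp
  with Suc show ?case by simp
qed simp

lemma represents_B:
  assumes "finite (Pk rng)" "wf_prog rng p"
  shows "represents (Pk rng) (B (Pk rng) p) (den (Pk rng) p)"
  using assms(2)
proof (induction p)
  case (Filter t)
  show ?case using represents_Bpred[OF assms(1)] by simp
next
  case (Assign f n)
  then show ?case by (intro representsI) (auto simp: Pk_def indicator_def)
next
  case (Par p q)
  then show ?case using represents_mUnion[OF assms(1)] by simp
next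
  case (Seq p q)
  then show ?case using represents_mSeq[OF assms(1)] by simp
next
  case (Choice r p q)
  then show ?case by (simp add: represents_mChoice)
next
  case (Star p)
  then show ?case using represents_Star[OF assms(1)] by simp
qed

theorem theorem3p1:
  fixes rng :: "'f::finite \<Rightarrow> nat set" and p :: "'f prog"
  assumes "\<forall>f. finite (rng f)"
    and "wf_prog rng p"
  shows "(\<forall>q\<in>star_bodies p. \<forall>a b. a \<subseteq> Pk rng \<longrightarrow> b \<subseteq> Pk rng \<longrightarrow>
            convergent (\<lambda>n. B (Pk rng) (iter q n) a b))
       \<and> (\<forall>a b. a \<subseteq> Pk rng \<longrightarrow> b \<subseteq> Pk rng \<longrightarrow>
            B (Pk rng) p a b = pmf (den (Pk rng) p a) b)"
proof -
  have fin: "finite (Pk rng)" by (rule finite_Pk[OF assms(1)])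
  have "convergent (\<lambda>n. B (Pk rng) (iter q n) a b)"
    if "q \<in> star_bodies p" "a \<subseteq> Pk rng" "b \<subseteq> Pk rng" for q a b
  proof -
    have "represents (Pk rng) (B (Pk rng) q) (den (Pk rng) q)"
      by (rule represents_B[OF fin wf_prog_star_bodies[OF assms(2) that(1)]])
    then show ?thesis
      unfolding B_iter convergent_def using mPow_tendsto_dsup_dPow[OF fin _ that(2,3)] by blast
  qed
  moreover have "B (Pk rng) p a b = pmf (den (Pk rng) p a) b"
    if "a \<subseteq> Pk rng" "b \<subseteq> Pk rng" for a b
    by (rule represents_entry[OF represents_B[OF fin assms(2)] that])
  ultimately show ?thesis by blast
qed

end
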